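(* Let $k\ge 1$ and let $G$ be a minimally $k$-connected graph with $n$ vertices and maximum degree $\Delta$. Then $$|V_k|\;\ge\;\frac{(k-1)n+2\,(c_F+|E_k|)+\max\{0,\Delta-(k+1)\}}{2k-1}.$$
   Context: All graphs are finite, simple and undirected. A $k$-separator is a set of $k\ge 0$ vertices whose deletion leaves a disconnected graph. A graph is $k$-connected if it has more than $k$ vertices and contains no $(k-1)$-separator. A $k$-connected graph $G$ is minimally $k$-connected if $G-e$ is not $k$-connected for every edge $e$. For a graph $G$: $V_k$ is the set of vertices of degree exactly $k$; $E_k$ is the set of edges of $G$ with both end vertices in $V_k$; $F:=G-V_k$ is the graph obtained by deleting $V_k$; and $c_F$ is the number of connected components of $F$. *)

theory Defs
  imports Complex_Main
begin

definition simple_graph :: "'a set \<Rightarrow> 'a set set \<Rightarrow> bool" where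
  "simple_graph V E \<longleftrightarrow> finite V \<and>
     (\<forall>e\<in>E. \<exists>u v. u \<noteq> v \<and> u \<in> V \<and> v \<in> V \<and> e = {u, v})"

definition adj :: "'a set set \<Rightarrow> 'a \<Rightarrow> 'a \<Rightarrow> bool" where
  "adj E u v \<longleftrightarrow> {u, v} \<in> E"

definition degree :: "'a set set \<Rightarrow> 'a \<Rightarrow> nat" where
  "degree E v = card {u. {v, u} \<in> E}"

definition reachable :: "'a set \<Rightarrow> 'a set set \<Rightarrow> 'a \<Rightarrow> 'a \<Rightarrow> bool" where
  "reachable V E u v \<longleftrightarrow> (u, v) \<in> ({(x, y). x \<in> V \<and> y \<in> V \<and> {x, y} \<in> E})\<^sup>*"

definition connected_graph :: "'a set \<Rightarrow> 'a set set \<Rightarrow> bool" where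
  "connected_graph V E \<longleftrightarrow> V \<noteq> {} \<and> (\<forall>u\<in>V. \<forall>v\<in>V. reachable V E u v)"

definition del_vertices_V :: "'a set \<Rightarrow> 'a set \<Rightarrow> 'a set" where
  "del_vertices_V V S = V - S"

definition del_vertices_E :: "'a set set \<Rightarrow> 'a set \<Rightarrow> 'a set set" where
  "del_vertices_E E S = {e \<in> E. e \<inter> S = {}}"

definition is_separator :: "'a set \<Rightarrow> 'a set set \<Rightarrow> nat \<Rightarrow> 'a set \<Rightarrow> bool" where
  "is_separator V E k S \<longleftrightarrow> S \<subseteq> V \<and> card S = k \<and>
     \<not> connected_graph (del_vertices_V V S) (del_vertices_E E S)"

definition k_connected :: "'a set \<Rightarrow> 'a set set \<Rightarrow> nat \<Rightarrow> bool" where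
  "k_connected V E k \<longleftrightarrow> card V > k \<and> \<not> (\<exists>S. is_separator V E (k - 1) S)"

definition minimally_k_connected :: "'a set \<Rightarrow> 'a set set \<Rightarrow> nat \<Rightarrow> bool" where
  "minimally_k_connected V E k \<longleftrightarrow> k_connected V E k \<and>
     (\<forall>e\<in>E. \<not> k_connected V (E - {e}) k)"

definition Vk :: "'a set \<Rightarrow> 'a set set \<Rightarrow> nat \<Rightarrow> 'a set" where
  "Vk V E k = {v \<in> V. degree E v = k}"

definition Ek :: "'a set \<Rightarrow> 'a set set \<Rightarrow> nat \<Rightarrow> 'a set set" where
  "Ek V E k = {e \<in> E. e \<subseteq> Vk V E k}"

definition max_degree :: "'a set \<Rightarrow> 'a set set \<Rightarrow> nat" where
  "max_degree V E = Max (degree E ` V)"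

definition num_components :: "'a set \<Rightarrow> 'a set set \<Rightarrow> nat" where
  "num_components V E = card ((\<lambda>v. {u \<in> V. reachable V E v u}) ` V)"

definition cF :: "'a set \<Rightarrow> 'a set set \<Rightarrow> nat \<Rightarrow> nat" where
  "cF V E k = num_components (del_vertices_V V (Vk V E k)) (del_vertices_E E (Vk V E k))"

end

theory Submission
  imports Defs
begin

text \<open>Mader's argument: in a minimally \<open>k\<close>-connected graph every edge \<open>g\<close> is the only
  edge across some separation of \<open>G - g\<close> by fewer than \<open>k\<close> vertices. Among such separations
  of edges whose endpoints have degree \<open>> k\<close>, take one with a smallest side \<open>A\<close>; a second
  such edge at the endpoint in \<open>A\<close> would have a separation with a strictly smaller side.
  Hence the edges of \<open>F = G - V\<^sub>k\<close> form a forest and \<open>|E(F)| + c\<^sub>F \<le> |V(F)|\<close>.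
  Counting the degrees of \<open>V\<^sub>k\<close> edge by edge gives
  \<open>k |V\<^sub>k| + 2 |E(F)| = (\<Sum>v\<in>V(F). deg v) + 2 |E\<^sub>k|\<close>, and every vertex of \<open>F\<close> has degree at
  least \<open>k + 1\<close>, a vertex of maximum degree \<open>\<Delta>\<close> contributing \<open>\<Delta> - (k + 1)\<close> more.
  The bound follows by eliminating \<open>|E(F)|\<close> and the degree sum.\<close>

lemma simple_graph_edgeD:
  "simple_graph V E \<Longrightarrow> e \<in> E \<Longrightarrow> \<exists>a b. a \<noteq> b \<and> a \<in> V \<and> b \<in> V \<and> e = {a, b}"
  by (simp add: simple_graph_def)

lemma simple_graph_finite_edges:
  assumes "simple_graph V E" shows "finite E"
proof -
  have "E \<subseteq> Pow V" using simple_graph_edgeD[OF assms] by blast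
  moreover have "finite V" using assms by (simp add: simple_graph_def)
  ultimately show ?thesis by (meson finite_Pow_iff finite_subset)
qed

lemma simple_graph_del_vertices:
  "simple_graph V E \<Longrightarrow> simple_graph (del_vertices_V V S) (del_vertices_E E S)"
  unfolding simple_graph_def del_vertices_V_def del_vertices_E_def by fastforce

lemma reachable_refl: "reachable V E u u"
  by (simp add: reachable_def)

lemma reachable_trans: "reachable V E u v \<Longrightarrow> reachable V E v w \<Longrightarrow> reachable V E u w"
  unfolding reachable_def by (rule rtrancl_trans)

lemma reachable_sym:
  assumes "reachable V E u v" shows "reachable V E v u"
proof -
  let ?r = "{(x, y). x \<in> V \<and> y \<in> V \<and> {x, y} \<in> E}"
  have "?r\<inverse> = ?r" by (auto simp: insert_commute)
  moreover have "(v, u) \<in> (?r\<inverse>)\<^sup>*" using assms unfolding reachable_def by (rule rtrancl_converseI)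
  ultimately show ?thesis unfolding reachable_def by simp
qed

lemma reachable_mono: "E1 \<subseteq> E2 \<Longrightarrow> reachable V E1 u v \<Longrightarrow> reachable V E2 u v"
  unfolding reachable_def by (erule rtrancl_mono[THEN subsetD, rotated]) auto

lemma reachable_edge: "u \<in> V \<Longrightarrow> v \<in> V \<Longrightarrow> {u, v} \<in> E \<Longrightarrow> reachable V E u v"
  unfolding reachable_def by (rule r_into_rtrancl) simp

lemma reachable_closed:
  assumes "reachable V E u v" "u \<in> X"
    and "\<And>a b. a \<in> X \<Longrightarrow> a \<in> V \<Longrightarrow> b \<in> V \<Longrightarrow> {a, b} \<in> E \<Longrightarrow> b \<in> X"
  shows "v \<in> X"
  using assms(1) unfolding reachable_def
proof (induction rule: rtrancl_induct)
  case base then show ?case using assms(2) .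
next
  case (step y z) then show ?case using assms(3) by blast
qed

definition component :: "'a set \<Rightarrow> 'a set set \<Rightarrow> 'a \<Rightarrow> 'a set" where
  "component V E v = {u \<in> V. reachable V E v u}"

lemma num_components_eq: "num_components V E = card (component V E ` V)"
  by (simp add: num_components_def component_def)

lemma component_Union_subgraph:
  assumes "E2 \<subseteq> E1" "s \<in> W"
  shows "{w \<in> W. \<exists>t \<in> component W E2 s. reachable W E1 t w} = component W E1 s"
proof (intro equalityI subsetI)
  fix w assume "w \<in> {w \<in> W. \<exists>t \<in> component W E2 s. reachable W E1 t w}"
  then obtain t where "w \<in> W" and st: "reachable W E2 s t" and tw: "reachable W E1 t w"
    unfolding component_def by blast
  have "reachable W E1 s w" by (rule reachable_trans[OF reachable_mono[OF assms(1) st] tw])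
  then show "w \<in> component W E1 s" using \<open>w \<in> W\<close> unfolding component_def by blast
next
  fix w assume "w \<in> component W E1 s"
  moreover have "s \<in> component W E2 s" using assms(2) reachable_refl unfolding component_def by fast
  ultimately show "w \<in> {w \<in> W. \<exists>t \<in> component W E2 s. reachable W E1 t w}"
    unfolding component_def by auto
qed

lemma num_components_delete_pendant_edge:
  assumes G: "simple_graph W E" and vu: "{v, u} \<in> E" and pendant: "\<forall>e\<in>E. v \<in> e \<longrightarrow> e = {v, u}"
  shows "num_components W E < num_components W (E - {{v, u}})"
proof -
  let ?E' = "E - {{v, u}}"
  \<comment> \<open>\<open>\<phi>\<close> sends each component of \<open>(W, E')\<close> to the component of \<open>(W, E)\<close> containing it;
    it is onto and identifies the components of \<open>v\<close> and \<open>u\<close>.\<close>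
  define \<phi> where "\<phi> C = {w \<in> W. \<exists>t\<in>C. reachable W E t w}" for C
  have uv: "u \<noteq> v" "u \<in> W" "v \<in> W"
    using simple_graph_edgeD[OF G vu] by (auto simp: doubleton_eq_iff)
  have \<phi>_component: "\<phi> (component W ?E' s) = component W E s" if "s \<in> W" for s
    using component_Union_subgraph[of ?E' E, OF _ that] unfolding \<phi>_def by blast
  then have image_\<phi>: "component W E ` W = \<phi> ` component W ?E' ` W"
    by (simp add: image_image cong: image_cong)
  have "u \<in> {v}" if "reachable W ?E' v u"
    by (rule reachable_closed[OF that]) (use pendant in auto)
  then have "\<not> reachable W ?E' v u" using uv by blast
  moreover have "u \<in> component W ?E' u" using uv reachable_refl by (simp add: component_def)
  ultimately have distinct: "component W ?E' v \<noteq> component W ?E' u"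
    by (auto simp: component_def)
  have vu_reach: "reachable W E v u" using uv vu by (rule_tac reachable_edge) auto
  moreover have uv_reach: "reachable W E u v" using vu_reach by (rule reachable_sym)
  ultimately have "component W E v = component W E u"
    unfolding component_def using reachable_trans[OF vu_reach] reachable_trans[OF uv_reach] by blast
  then have \<phi>_eq: "\<phi> (component W ?E' v) = \<phi> (component W ?E' u)"
    using \<phi>_component uv by simp
  have not_inj: "\<not> inj_on \<phi> (component W ?E' ` W)"
  proof
    assume inj: "inj_on \<phi> (component W ?E' ` W)"
    have "component W ?E' v = component W ?E' u"
      by (rule inj_onD[OF inj \<phi>_eq]) (use uv in auto)
    then show False using distinct by blast
  qed
  have "finite (component W ?E' ` W)" using G by (simp add: simple_graph_def)
  then have "card (\<phi> ` component W ?E' ` W) < card (component W ?E' ` W)"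
    using card_image_le inj_on_iff_eq_card not_inj by (metis le_neq_implies_less)
  then show ?thesis using image_\<phi> by (simp add: num_components_eq)
qed

text \<open>Every nonempty set of edges has a vertex lying on exactly one of them; for finite
  simple graphs this is acyclicity.\<close>
definition forest :: "'a set set \<Rightarrow> bool" where
  "forest E \<longleftrightarrow> (\<forall>D \<subseteq> E. D \<noteq> {} \<longrightarrow> (\<exists>v h. h \<in> D \<and> v \<in> h \<and> (\<forall>e\<in>D. v \<in> e \<longrightarrow> e = h)))"

lemma forestD:
  "forest E \<Longrightarrow> D \<subseteq> E \<Longrightarrow> D \<noteq> {} \<Longrightarrow> \<exists>v h. h \<in> D \<and> v \<in> h \<and> (\<forall>e\<in>D. v \<in> e \<longrightarrow> e = h)"
  by (simp add: forest_def)

lemma forest_subset: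
  assumes "forest E" "E' \<subseteq> E" shows "forest E'"
  unfolding forest_def
proof (intro allI impI)
  fix D assume "D \<subseteq> E'" "D \<noteq> {}"
  then show "\<exists>v h. h \<in> D \<and> v \<in> h \<and> (\<forall>e\<in>D. v \<in> e \<longrightarrow> e = h)"
    using forestD[OF assms(1)] assms(2) by (meson subset_trans)
qed

lemma forest_card_edges_components:
  assumes "simple_graph W E" "forest E"
  shows "card E + num_components W E \<le> card W"
  using assms
proof (induction "card E" arbitrary: E rule: less_induct)
  case less
  show ?case
  proof (cases "E = {}")
    case True
    have "finite W" using less.prems(1) by (simp add: simple_graph_def)
    then show ?thesis using True card_image_le by (simp add: num_components_eq)
  next
    case False
    then obtain v h where hE: "h \<in> E" and "v \<in> h" and pendant: "\<forall>e\<in>E. v \<in> e \<longrightarrow> e = h"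
      using forestD[OF less.prems(2) order_refl] by blast
    obtain a b where "h = {a, b}" using simple_graph_edgeD[OF less.prems(1) hE] by blast
    then obtain u where h: "h = {v, u}" using \<open>v \<in> h\<close> by (cases "v = a") auto
    have finE: "finite E" using simple_graph_finite_edges[OF less.prems(1)] .
    have "card (E - {h}) + num_components W (E - {h}) \<le> card W"
    proof (rule less.hyps)
      show "card (E - {h}) < card E" by (rule card_Diff1_less[OF finE hE])
      show "simple_graph W (E - {h})" using less.prems(1) by (simp add: simple_graph_def)
      show "forest (E - {h})" using less.prems(2) by (rule forest_subset) (rule Diff_subset)
    qed
    moreover have "num_components W E < num_components W (E - {h})"
      unfolding h by (rule num_components_delete_pendant_edge[OF less.prems(1) hE[unfolded h] pendant[unfolded h]])
    moreover have "card E = Suc (card (E - {h}))"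
      using finE hE by (rule card_Suc_Diff1[symmetric])
    ultimately show ?thesis by linarith
  qed
qed

lemma degree_eq_card_incident_edges:
  assumes "simple_graph V E"
  shows "degree E v = card {e \<in> E. v \<in> e}"
proof -
  have "bij_betw (\<lambda>u. {v, u}) {u. {v, u} \<in> E} {e \<in> E. v \<in> e}"
  proof (rule bij_betwI')
    fix a b show "({v, a} = {v, b}) = (a = b)" by (auto simp: doubleton_eq_iff)
  next
    fix a assume "a \<in> {u. {v, u} \<in> E}" then show "{v, a} \<in> {e \<in> E. v \<in> e}" by simp
  next
    fix e assume e: "e \<in> {e \<in> E. v \<in> e}"
    then obtain p q where "e = {p, q}" using simple_graph_edgeD[OF assms] by blast
    then have "e = {v, if v = p then q else p}" using e by auto
    then show "\<exists>a\<in>{u. {v, u} \<in> E}. e = {v, a}" using e by auto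
  qed
  then show ?thesis unfolding degree_def by (rule bij_betw_same_card)
qed

lemma sum_degree_eq_sum_edges:
  assumes "simple_graph V E" "finite A"
  shows "(\<Sum>v\<in>A. degree E v) = (\<Sum>e\<in>E. card (e \<inter> A))"
proof -
  have finE: "finite E" using simple_graph_finite_edges[OF assms(1)] .
  have "(\<Sum>v\<in>A. degree E v) = (\<Sum>v\<in>A. \<Sum>e\<in>E. if v \<in> e then 1 else 0)"
    using finE by (simp add: degree_eq_card_incident_edges[OF assms(1)] sum.inter_filter[symmetric])
  also have "\<dots> = (\<Sum>e\<in>E. \<Sum>v\<in>A. if v \<in> e then 1 else 0)" by (rule sum.swap)
  also have "\<dots> = (\<Sum>e\<in>E. card (e \<inter> A))"
    using assms(2) by (simp add: sum.inter_filter[symmetric] Int_def conj_commute)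
  finally show ?thesis .
qed

text \<open>Both sides agree edge by edge: an edge inside \<open>K\<close> or inside \<open>V - K\<close> contributes 2
  to each side, an edge between them 1.\<close>
lemma sum_degree_split:
  assumes G: "simple_graph V E" and "K \<subseteq> V"
  shows "(\<Sum>v\<in>K. degree E v) + 2 * card (del_vertices_E E K)
       = (\<Sum>v\<in>V - K. degree E v) + 2 * card {e \<in> E. e \<subseteq> K}"
proof -
  have finV: "finite V" using G by (simp add: simple_graph_def)
  have finE: "finite E" using simple_graph_finite_edges[OF G] .
  have per_edge: "card (e \<inter> K) + 2 * (if e \<inter> K = {} then 1 else 0)
      = card (e \<inter> (V - K)) + 2 * (if e \<subseteq> K then 1 else 0)" if eE: "e \<in> E" for e
  proof -
    obtain a b where "a \<noteq> b" "a \<in> V" "b \<in> V" "e = {a, b}" using simple_graph_edgeD[OF G eE] by blast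
    then show ?thesis by (cases "a \<in> K"; cases "b \<in> K") auto
  qed
  have count: "(\<Sum>e\<in>E. 2 * (if P e then 1 else 0)) = 2 * card {e \<in> E. P e}" for P :: "'a set \<Rightarrow> bool"
    using finE by (simp add: sum_distrib_left[symmetric] sum.inter_filter[symmetric])
  have "(\<Sum>e\<in>E. card (e \<inter> K)) + 2 * card {e \<in> E. e \<inter> K = {}}
      = (\<Sum>e\<in>E. card (e \<inter> (V - K))) + 2 * card {e \<in> E. e \<subseteq> K}"
    using sum.cong[OF refl per_edge, of E] by (simp add: sum.distrib count)
  then show ?thesis
    using sum_degree_eq_sum_edges[OF G] finV assms(2)
    by (simp add: del_vertices_E_def finite_subset)
qed

lemma sum_lower_bound_with_excess:
  fixes f :: "'a \<Rightarrow> nat"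
  assumes "finite A" "\<forall>v\<in>A. c \<le> f v" "\<forall>v\<in>B - A. f v \<le> c" "w \<in> B"
  shows "c * card A + (f w - c) \<le> sum f A"
proof (cases "w \<in> A")
  case True
  have "c * card (A - {w}) \<le> sum f (A - {w})"
    using sum_mono[of "A - {w}" "\<lambda>_. c" f] assms(2) by (simp add: mult.commute)
  moreover have "sum f A = f w + sum f (A - {w})" using sum.remove[OF assms(1) True] .
  moreover have "card A = Suc (card (A - {w}))" using card_Suc_Diff1[OF assms(1) True] by simp
  moreover have "c \<le> f w" using assms(2) True by blast
  ultimately show ?thesis by (simp add: algebra_simps)
next
  case False
  then have "f w - c = 0" using assms(3,4) by simp
  moreover have "c * card A \<le> sum f A"
    using sum_mono[of A "\<lambda>_. c" f] assms(2) by (simp add: mult.commute)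
  ultimately show ?thesis by simp
qed

definition vertex_partition :: "'a set \<Rightarrow> 'a set \<Rightarrow> 'a set \<Rightarrow> 'a set \<Rightarrow> bool" where
  "vertex_partition V S A B \<longleftrightarrow> S \<union> A \<union> B = V \<and> S \<inter> A = {} \<and> S \<inter> B = {} \<and> A \<inter> B = {}"

definition crosses :: "'a set \<Rightarrow> 'a set \<Rightarrow> 'a set \<Rightarrow> bool" where
  "crosses e A B \<longleftrightarrow> e \<inter> A \<noteq> {} \<and> e \<inter> B \<noteq> {}"

definition no_small_separation :: "'a set \<Rightarrow> 'a set set \<Rightarrow> nat \<Rightarrow> bool" where
  "no_small_separation V E k \<longleftrightarrow> (\<forall>S A B. vertex_partition V S A B \<longrightarrow> A \<noteq> {} \<longrightarrow> B \<noteq> {}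
     \<longrightarrow> card S < k \<longrightarrow> (\<exists>e\<in>E. crosses e A B))"

definition critical_separation ::
    "'a set \<Rightarrow> 'a set set \<Rightarrow> nat \<Rightarrow> 'a set \<Rightarrow> 'a set \<Rightarrow> 'a set \<Rightarrow> 'a set \<Rightarrow> bool" where
  "critical_separation V E k g S A B \<longleftrightarrow> g \<in> E \<and> vertex_partition V S A B \<and> card S < k
     \<and> crosses g A B \<and> (\<forall>e\<in>E - {g}. \<not> crosses e A B)"

lemma no_small_separationD:
  "no_small_separation V E k \<Longrightarrow> vertex_partition V S A B \<Longrightarrow> A \<noteq> {} \<Longrightarrow> B \<noteq> {}
    \<Longrightarrow> card S < k \<Longrightarrow> \<exists>e\<in>E. crosses e A B"
  unfolding no_small_separation_def by blast

lemma crosses_commute: "crosses e A B \<longleftrightarrow> crosses e B A"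
  unfolding crosses_def by auto

lemma vertex_partition_commute: "vertex_partition V S A B \<longleftrightarrow> vertex_partition V S B A"
  unfolding vertex_partition_def by (metis Int_commute sup_assoc sup_commute)

lemma critical_separation_swap:
  "critical_separation V E k g S A B \<Longrightarrow> critical_separation V E k g S B A"
  unfolding critical_separation_def by (simp add: crosses_commute vertex_partition_commute)

lemma crosses_doubleton:
  "crosses {u, v} A B \<Longrightarrow> A \<inter> B = {} \<Longrightarrow> u \<in> A \<and> v \<in> B \<or> u \<in> B \<and> v \<in> A"
  unfolding crosses_def by auto

lemma reachable_stays_in_side:
  assumes "reachable W E a b" "a \<in> X" "W \<subseteq> X \<union> Y" "\<forall>e\<in>E. \<not> crosses e X Y"
  shows "b \<in> X"
proof (rule reachable_closed[OF assms(1,2)])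
  fix p q assume "p \<in> X" "q \<in> W" "{p, q} \<in> E"
  moreover from this have "\<not> crosses {p, q} X Y" using assms(4) by blast
  ultimately show "q \<in> X" using assms(3) unfolding crosses_def by auto
qed

lemma obtain_superset_avoiding:
  assumes "finite V" "U \<subseteq> V" "a \<in> V - U" "b \<in> V - U" "a \<noteq> b" "card U \<le> n" "n + 2 \<le> card V"
  obtains S where "U \<subseteq> S" "S \<subseteq> V" "card S = n" "a \<notin> S" "b \<notin> S"
proof -
  have finU: "finite U" using assms(1,2) by (rule finite_subset[rotated])
  have "card (V - U - {a, b}) = card (V - U) - card {a, b}"
    by (rule card_Diff_subset) (use assms in auto)
  moreover have "card (V - U) = card V - card U" by (rule card_Diff_subset[OF finU assms(2)])
  ultimately have "n - card U \<le> card (V - U - {a, b})" using assms(5-7) by simp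
  then obtain Z where Z: "Z \<subseteq> V - U - {a, b}" "card Z = n - card U"
    by (rule obtain_subset_with_card_n)
  have "finite Z" using Z(1) assms(1) by (simp add: finite_subset)
  moreover have "U \<inter> Z = {}" using Z(1) by blast
  ultimately have "card (U \<union> Z) = n" using card_Un_disjoint[OF finU] Z(2) assms(6) by simp
  then show ?thesis using that[of "U \<union> Z"] Z(1) assms(2-4) by auto
qed

lemma k_connected_no_small_separation:
  assumes G: "simple_graph V E" and kc: "k_connected V E k"
  shows "no_small_separation V E k"
  unfolding no_small_separation_def
proof (intro allI impI, rule ccontr)
  fix U X Y
  assume P: "vertex_partition V U X Y" and "X \<noteq> {}" "Y \<noteq> {}" and cU: "card U < k"
    and "\<not> (\<exists>e\<in>E. crosses e X Y)"
  then have no_cross: "\<forall>e\<in>E. \<not> crosses e X Y" by blast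
  obtain a b where aX: "a \<in> X" and bY: "b \<in> Y" using \<open>X \<noteq> {}\<close> \<open>Y \<noteq> {}\<close> by blast
  have finV: "finite V" using G by (simp add: simple_graph_def)
  have cV: "k < card V" using kc by (simp add: k_connected_def)
  \<comment> \<open>\<open>is_separator\<close> asks for exactly \<open>k - 1\<close> vertices, so \<open>U\<close> is padded.\<close>
  obtain S where S: "U \<subseteq> S" "S \<subseteq> V" "card S = k - 1" "a \<notin> S" "b \<notin> S"
    by (rule obtain_superset_avoiding[of V U a b "k - 1"])
      (use finV cV aX bY P cU in \<open>auto simp: vertex_partition_def\<close>)
  have "b \<in> X" if "reachable (V - S) (del_vertices_E E S) a b"
  proof (rule reachable_stays_in_side[OF that aX])
    show "V - S \<subseteq> X \<union> Y" using P S(1) by (auto simp: vertex_partition_def)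
    show "\<forall>e\<in>del_vertices_E E S. \<not> crosses e X Y" using no_cross by (simp add: del_vertices_E_def)
  qed
  then have "\<not> reachable (V - S) (del_vertices_E E S) a b"
    using bY P by (auto simp: vertex_partition_def)
  moreover have "a \<in> V - S" "b \<in> V - S" using aX bY P S by (auto simp: vertex_partition_def)
  ultimately have "\<not> connected_graph (V - S) (del_vertices_E E S)"
    unfolding connected_graph_def by blast
  then have "is_separator V E (k - 1) S"
    using S(2,3) unfolding is_separator_def del_vertices_V_def by blast
  then show False using kc by (simp add: k_connected_def)
qed

lemma minimally_k_connected_critical_separation:
  assumes G: "simple_graph V E" and mk: "minimally_k_connected V E k" and "0 < k" and gE: "g \<in> E"
  shows "\<exists>S A B. critical_separation V E k g S A B"
proof -
  have kc: "k_connected V E k" using mk by (simp add: minimally_k_connected_def)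
  have cV: "k < card V" using kc by (simp add: k_connected_def)
  have "\<not> k_connected V (E - {g}) k" using mk gE by (simp add: minimally_k_connected_def)
  then obtain S where "is_separator V (E - {g}) (k - 1) S" using cV by (auto simp: k_connected_def)
  then have SV: "S \<subseteq> V" and cS: "card S < k"
    and nc: "\<not> connected_graph (V - S) (del_vertices_E (E - {g}) S)"
    using \<open>0 < k\<close> by (auto simp: is_separator_def del_vertices_V_def)
  let ?E' = "del_vertices_E (E - {g}) S"
  have "finite V" using G by (simp add: simple_graph_def)
  then have "\<not> V \<subseteq> S" using card_mono[of S V] SV cS cV by (auto simp: finite_subset)
  then obtain u w where u: "u \<in> V - S" and w: "w \<in> V - S" and nr: "\<not> reachable (V - S) ?E' u w"
    using nc unfolding connected_graph_def by auto
  define A where "A = component (V - S) ?E' u"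
  define B where "B = V - S - A"
  have P: "vertex_partition V S A B"
    using SV unfolding vertex_partition_def A_def B_def component_def by auto
  have no_cross: "\<not> crosses e A B" if eE: "e \<in> E - {g}" for e
  proof
    assume "crosses e A B"
    moreover obtain a b where "e = {a, b}" using simple_graph_edgeD[OF G] eE by blast
    ultimately obtain p q where pq: "p \<in> A" "q \<in> B" "e = {p, q}"
      using crosses_doubleton P unfolding vertex_partition_def by (metis insert_commute)
    then have "{p, q} \<in> ?E'" and pq_in: "p \<in> V - S" "q \<in> V - S"
      using eE P unfolding vertex_partition_def del_vertices_E_def by auto
    then have "reachable (V - S) ?E' p q" by (intro reachable_edge)
    moreover have "reachable (V - S) ?E' u p" using pq(1) by (simp add: A_def component_def)
    ultimately have "q \<in> A" using pq_in(2) reachable_trans by (simp add: A_def component_def)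
    then show False using pq(2) by (simp add: B_def)
  qed
  have "u \<in> A" using u reachable_refl by (simp add: A_def component_def)
  moreover have "w \<in> B" using w nr by (simp add: B_def A_def component_def)
  ultimately obtain e where "e \<in> E" "crosses e A B"
    using no_small_separationD[OF k_connected_no_small_separation[OF G kc] P _ _ cS] by blast
  moreover from this have "e = g" using no_cross by blast
  ultimately show ?thesis
    using P cS no_cross unfolding critical_separation_def by blast
qed

lemma no_small_separation_min_degree:
  assumes G: "simple_graph V E" and nss: "no_small_separation V E k" and cV: "k < card V"
    and v: "v \<in> V"
  shows "k \<le> degree E v"
proof (rule ccontr)
  let ?N = "{u. {v, u} \<in> E}"
  assume "\<not> k \<le> degree E v"
  then have cN: "card ?N < k" unfolding degree_def by simp
  have finV: "finite V" using G by (simp add: simple_graph_def)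
  have NV: "?N \<subseteq> V" and vN: "v \<notin> ?N"
    using G unfolding simple_graph_def by (auto simp: doubleton_eq_iff)
  have "card (insert v ?N) \<le> card ?N + 1" by (simp add: card_insert_le_m1)
  then have "\<not> V \<subseteq> insert v ?N"
    using card_mono[of "insert v ?N" V] NV finV cN cV by (auto simp: finite_subset)
  then have "V - ?N - {v} \<noteq> {}" by auto
  moreover have "vertex_partition V ?N {v} (V - ?N - {v})"
    using NV vN v unfolding vertex_partition_def by auto
  ultimately obtain e where "e \<in> E" "crosses e {v} (V - ?N - {v})"
    using no_small_separationD[OF nss _ _ _ cN] by blast
  moreover obtain p q where "e = {p, q}" using simple_graph_edgeD[OF G \<open>e \<in> E\<close>] by blast
  ultimately obtain w where "{v, w} \<in> E" "w \<in> V - ?N - {v}"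
    unfolding crosses_def by (auto simp: insert_commute)
  then show False by simp
qed

lemma card_Un3_disjoint:
  assumes "finite X" "finite Y" "finite Z" "X \<inter> Y = {}" "X \<inter> Z = {}" "Y \<inter> Z = {}"
  shows "card (X \<union> Y \<union> Z) = card X + card Y + card Z"
  using assms by (simp add: card_Un_disjoint Int_Un_distrib2)

lemma card_Int_vertex_partition:
  assumes "finite X" "X \<subseteq> V" "vertex_partition V S A B"
  shows "card X = card (X \<inter> S) + card (X \<inter> A) + card (X \<inter> B)"
proof -
  have "X = (X \<inter> S) \<union> (X \<inter> A) \<union> (X \<inter> B)" using assms(2,3) by (auto simp: vertex_partition_def)
  moreover have "card ((X \<inter> S) \<union> (X \<inter> A) \<union> (X \<inter> B)) = card (X \<inter> S) + card (X \<inter> A) + card (X \<inter> B)"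
    using assms(1,3) by (intro card_Un3_disjoint) (auto simp: vertex_partition_def)
  ultimately show ?thesis by simp
qed

definition corner_boundary :: "'a set \<Rightarrow> 'a set \<Rightarrow> 'a set \<Rightarrow> 'a set \<Rightarrow> 'a set" where
  "corner_boundary S A T A' = (A \<inter> T) \<union> (S \<inter> T) \<union> (S \<inter> A')"

lemma card_corner_boundary:
  assumes "finite V" "vertex_partition V S A B" "vertex_partition V T A' B'"
  shows "card (corner_boundary S A T A') = card (A \<inter> T) + card (S \<inter> T) + card (S \<inter> A')"
  unfolding corner_boundary_def using assms
  by (auto intro!: card_Un3_disjoint simp: vertex_partition_def intro: finite_subset)

lemma card_opposite_corner_boundaries:
  assumes "finite V" "vertex_partition V S A B" "vertex_partition V T A' B'"
  shows "card (corner_boundary S A T A') + card (corner_boundary S B T B') = card S + card T"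
proof -
  have fin: "finite S" "finite T" "S \<subseteq> V" "T \<subseteq> V"
    using assms unfolding vertex_partition_def by (auto intro: finite_subset)
  have "card S = card (S \<inter> T) + card (S \<inter> A') + card (S \<inter> B')"
    by (rule card_Int_vertex_partition[OF fin(1,3) assms(3)])
  moreover have "card T = card (S \<inter> T) + card (A \<inter> T) + card (B \<inter> T)"
    using card_Int_vertex_partition[OF fin(2,4) assms(2)] by (simp add: Int_commute)
  moreover have "card (corner_boundary S B T B') = card (B \<inter> T) + card (S \<inter> T) + card (S \<inter> B')"
    using card_corner_boundary[of V S B A T B' A'] assms by (simp add: vertex_partition_commute)
  ultimately show ?thesis using card_corner_boundary[OF assms] by simp
qed

text \<open>The corner \<open>A \<inter> A'\<close> of two separations is cut off from the rest of the graph by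
  its boundary; edges leaving the corner can only be \<open>g\<close> or \<open>f\<close>.\<close>
lemma corner_boundary_large:
  assumes nss: "no_small_separation V E k"
    and P1: "vertex_partition V S A B" "B \<noteq> {}" "\<forall>e\<in>E - {g}. \<not> crosses e A B"
    and P2: "vertex_partition V T A' B'" "\<forall>e\<in>E - {f}. \<not> crosses e A' B'"
    and Q: "Q \<subseteq> A \<inter> A'" "Q \<noteq> {}" "g \<inter> Q = {}" "f \<inter> Q = {}"
  shows "k \<le> card (corner_boundary S A T A' \<union> (A \<inter> A' - Q))"
proof (rule ccontr)
  define U where "U = corner_boundary S A T A' \<union> (A \<inter> A' - Q)"
  assume "\<not> k \<le> card (corner_boundary S A T A' \<union> (A \<inter> A' - Q))"
  then have "card U < k" by (simp add: U_def)
  moreover have "vertex_partition V U Q (V - U - Q)"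
    using Q(1) P1(1) P2(1) unfolding vertex_partition_def U_def corner_boundary_def by auto
  moreover have "B \<subseteq> V - U - Q"
    using Q(1) P1(1) unfolding vertex_partition_def U_def corner_boundary_def by auto
  ultimately obtain e where eE: "e \<in> E" and "crosses e Q (V - U - Q)"
    using no_small_separationD[OF nss] Q(2) P1(2) by blast
  then obtain v w where ve: "v \<in> e" "v \<in> Q" and we: "w \<in> e" "w \<in> V - U - Q"
    unfolding crosses_def by blast
  have "e \<noteq> g" "e \<noteq> f" using ve Q(3,4) by auto
  then have "\<not> crosses e A B" "\<not> crosses e A' B'" using eE P1(3) P2(2) by auto
  then have "w \<notin> B" "w \<notin> B'" using ve we Q(1) unfolding crosses_def by auto
  then show False
    using we(2) P1(1) P2(1) unfolding vertex_partition_def U_def corner_boundary_def by auto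
qed

lemma critical_neighbours:
  assumes G: "simple_graph V E"
    and sep1: "critical_separation V E k {x, y} S A B" "x \<in> A"
    and sep2: "critical_separation V E k {x, z} T A' B'" "x \<in> A'"
  shows "{u. {x, u} \<in> E} \<subseteq> corner_boundary S A T A' \<union> (A \<inter> A' - {x}) \<union> {y, z}"
proof
  fix u assume "u \<in> {u. {x, u} \<in> E}"
  then have uE: "{x, u} \<in> E" by simp
  then have "u \<noteq> x" "u \<in> V" using simple_graph_edgeD[OF G uE] by (auto simp: doubleton_eq_iff)
  moreover have "u \<notin> B \<and> u \<notin> B'" if "u \<noteq> y" "u \<noteq> z"
  proof -
    have "\<not> crosses {x, u} A B" "\<not> crosses {x, u} A' B'"
      using sep1(1) sep2(1) uE that by (auto simp: critical_separation_def doubleton_eq_iff)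
    then show ?thesis using sep1(2) sep2(2) unfolding crosses_def by auto
  qed
  moreover have "vertex_partition V S A B" "vertex_partition V T A' B'"
    using sep1(1) sep2(1) by (simp_all add: critical_separation_def)
  ultimately show "u \<in> corner_boundary S A T A' \<union> (A \<inter> A' - {x}) \<union> {y, z}"
    unfolding corner_boundary_def vertex_partition_def by auto
qed

lemma critical_corner_boundary:
  assumes G: "simple_graph V E" and nss: "no_small_separation V E k"
    and sep1: "critical_separation V E k {x, y} S A B" "x \<in> A" "y \<in> B"
    and sep2: "critical_separation V E k {x, z} T A' B'" "x \<in> A'" "z \<in> B'"
    and deg: "k < degree E x"
  shows "k \<le> card (corner_boundary S A T A') + 1"
proof -
  let ?L = "corner_boundary S A T A'"
  have P1: "vertex_partition V S A B" "\<forall>e\<in>E - {{x, y}}. \<not> crosses e A B"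
    and P2: "vertex_partition V T A' B'" "\<forall>e\<in>E - {{x, z}}. \<not> crosses e A' B'"
    using sep1(1) sep2(1) by (simp_all add: critical_separation_def)
  have finL: "finite ?L" using G P1(1) unfolding simple_graph_def vertex_partition_def corner_boundary_def
    by (auto intro: finite_subset)
  show ?thesis
  proof (cases "A \<inter> A' - {x} = {}")
    case False
    have "k \<le> card (?L \<union> (A \<inter> A' - (A \<inter> A' - {x})))"
      using sep1(2,3) sep2(2,3) P1 P2 False
      by (intro corner_boundary_large[OF nss]) (auto simp: vertex_partition_def)
    also have "A \<inter> A' - (A \<inter> A' - {x}) = {x}" using sep1(2) sep2(2) by auto
    finally show ?thesis using card_Un_le[of ?L "{x}"] by simp
  next
    case True
    then have "degree E x \<le> card (?L \<union> {y, z})"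
      unfolding degree_def using finL critical_neighbours[OF G sep1(1,2) sep2(1,2)]
      by (intro card_mono) auto
    also have "\<dots> \<le> card ?L + card {y, z}" by (rule card_Un_le)
    also have "\<dots> \<le> card ?L + 2" by (cases "y = z") auto
    finally show ?thesis using deg by simp
  qed
qed

lemma critical_opposite_corner_empty:
  assumes G: "simple_graph V E" and nss: "no_small_separation V E k"
    and sep1: "critical_separation V E k {x, y} S A B" "x \<in> A" "y \<in> B"
    and sep2: "critical_separation V E k {x, z} T A' B'" "x \<in> A'" "z \<in> B'"
    and "y \<noteq> z" and deg: "k < degree E x"
  shows "B \<inter> B' = {}"
proof (rule ccontr)
  assume "B \<inter> B' \<noteq> {}"
  have P1: "vertex_partition V S A B" "\<forall>e\<in>E - {{x, y}}. \<not> crosses e A B" "card S < k"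
    and P2: "vertex_partition V T A' B'" "\<forall>e\<in>E - {{x, z}}. \<not> crosses e A' B'" "card T < k"
    and "{x, y} \<in> E" "{x, z} \<in> E"
    using sep1(1) sep2(1) by (simp_all add: critical_separation_def)
  moreover have "{x, y} \<noteq> {x, z}" using \<open>y \<noteq> z\<close> by (auto simp: doubleton_eq_iff)
  ultimately have "\<not> crosses {x, y} A' B'" "\<not> crosses {x, z} A B" by auto
  then have "y \<notin> B'" "z \<notin> B" using sep1(2) sep2(2) unfolding crosses_def by auto
  have "k \<le> card (corner_boundary S B T B' \<union> (B \<inter> B' - (B \<inter> B')))"
  proof (rule corner_boundary_large[OF nss])
    show "vertex_partition V S B A" "vertex_partition V T B' A'"
      using P1(1) P2(1) by (simp_all add: vertex_partition_commute)
    show "\<forall>e\<in>E - {{x, y}}. \<not> crosses e B A" "\<forall>e\<in>E - {{x, z}}. \<not> crosses e B' A'"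
      using P1(2) P2(2) by (simp_all add: crosses_commute)
    show "A \<noteq> {}" "B \<inter> B' \<subseteq> B \<inter> B'" "B \<inter> B' \<noteq> {}"
      using sep1(2) \<open>B \<inter> B' \<noteq> {}\<close> by auto
    show "{x, y} \<inter> (B \<inter> B') = {}" "{x, z} \<inter> (B \<inter> B') = {}"
      using sep1(2) P1(1) \<open>y \<notin> B'\<close> \<open>z \<notin> B\<close> unfolding vertex_partition_def by auto
  qed
  moreover have "k \<le> card (corner_boundary S A T A') + 1"
    by (rule critical_corner_boundary[OF G nss sep1 sep2 deg])
  moreover have "finite V" using G by (simp add: simple_graph_def)
  ultimately show False
    using card_opposite_corner_boundaries[OF _ P1(1) P2(1)] P1(3) P2(3) by simp
qed

lemma critical_separation_shrinks:
  assumes G: "simple_graph V E" and nss: "no_small_separation V E k"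
    and sep1: "critical_separation V E k {x, y} S A B" "x \<in> A" "y \<in> B"
    and sep2: "critical_separation V E k {x, z} T A' B'" "x \<in> A'" "z \<in> B'"
    and "y \<noteq> z" and deg: "k < degree E x"
  shows "card B' < card A"
proof -
  have P1: "vertex_partition V S A B" "card S < k" and P2: "vertex_partition V T A' B'"
    using sep1(1) sep2(1) by (simp_all add: critical_separation_def)
  have "finite V" using G by (simp add: simple_graph_def)
  then have fin: "finite A" "finite B'" "finite S" "A \<subseteq> V" "B' \<subseteq> V" "S \<subseteq> V"
    using P1(1) P2(1) unfolding vertex_partition_def by (auto intro: finite_subset)
  have "card A = card (A \<inter> T) + card (A \<inter> A') + card (A \<inter> B')"
    by (rule card_Int_vertex_partition[OF fin(1,4) P2])
  moreover have "card B' = card (S \<inter> B') + card (A \<inter> B') + card (B \<inter> B')"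
    using card_Int_vertex_partition[OF fin(2,5) P1(1)] by (simp add: Int_commute)
  moreover have "B \<inter> B' = {}"
    by (rule critical_opposite_corner_empty[OF G nss sep1 sep2]) fact+
  moreover have "card S = card (S \<inter> T) + card (S \<inter> A') + card (S \<inter> B')"
    by (rule card_Int_vertex_partition[OF fin(3,6) P2])
  moreover have "k \<le> card (corner_boundary S A T A') + 1"
    by (rule critical_corner_boundary[OF G nss sep1 sep2 deg])
  moreover have "card (corner_boundary S A T A') = card (A \<inter> T) + card (S \<inter> T) + card (S \<inter> A')"
    by (rule card_corner_boundary[OF \<open>finite V\<close> P1(1) P2])
  moreover have "0 < card (A \<inter> A')" using sep1(2) sep2(2) fin(1) card_gt_0_iff by blast
  ultimately show ?thesis using P1(2) by simp
qed

lemma critical_separation_endpoints: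
  assumes G: "simple_graph V E" and sep: "critical_separation V E k g S A B"
  obtains x y where "g = {x, y}" "x \<in> A" "y \<in> B"
proof -
  have gE: "g \<in> E" and cr: "crosses g A B" and AB: "A \<inter> B = {}"
    using sep by (simp_all add: critical_separation_def vertex_partition_def)
  obtain a b where g: "g = {a, b}" using simple_graph_edgeD[OF G gE] by blast
  have "a \<in> A \<and> b \<in> B \<or> a \<in> B \<and> b \<in> A" using crosses_doubleton[OF cr[unfolded g] AB] .
  then show ?thesis
  proof
    assume "a \<in> A \<and> b \<in> B" then show ?thesis using that[of a b] g by simp
  next
    assume "a \<in> B \<and> b \<in> A" then show ?thesis using that[of b a] g by (simp add: insert_commute)
  qed
qed

lemma critical_separation_at_endpoint:
  assumes G: "simple_graph V E" and sep: "critical_separation V E k {x, z} T A B"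
  obtains A' B' where "critical_separation V E k {x, z} T A' B'" "x \<in> A'" "z \<in> B'"
proof -
  obtain a b where ab: "{x, z} = {a, b}" "a \<in> A" "b \<in> B"
    using critical_separation_endpoints[OF G sep] by blast
  have "{x, z} \<in> E" using sep by (simp add: critical_separation_def)
  then have "x \<noteq> z" using simple_graph_edgeD[OF G \<open>{x, z} \<in> E\<close>] by (auto simp: doubleton_eq_iff)
  then consider "x = a" "z = b" | "x = b" "z = a" using ab(1) by (auto simp: doubleton_eq_iff)
  then show ?thesis
  proof cases
    case 1 then show ?thesis using that sep ab(2,3) by simp
  next
    case 2 then show ?thesis using that critical_separation_swap[OF sep] ab(2,3) by simp
  qed
qed

lemma high_degree_edges_forest:
  assumes G: "simple_graph V E" and nss: "no_small_separation V E k"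
    and crit: "\<forall>g\<in>E. \<exists>S A B. critical_separation V E k g S A B"
  shows "forest {e \<in> E. \<forall>v\<in>e. k < degree E v}"
  unfolding forest_def
proof (intro allI impI, rule ccontr)
  fix D assume D: "D \<subseteq> {e \<in> E. \<forall>v\<in>e. k < degree E v}" "D \<noteq> {}"
    and no_leaf: "\<not> (\<exists>v h. h \<in> D \<and> v \<in> h \<and> (\<forall>e\<in>D. v \<in> e \<longrightarrow> e = h))"
  define sides where "sides = {A. \<exists>g S B. g \<in> D \<and> critical_separation V E k g S A B}"
  obtain g0 where "g0 \<in> D" using D(2) by blast
  then obtain S0 A0 B0 where "critical_separation V E k g0 S0 A0 B0" using crit D(1) by blast
  then have "A0 \<in> sides" using \<open>g0 \<in> D\<close> unfolding sides_def by blast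
  then obtain A where "A \<in> sides" and minA: "\<And>A'. A' \<in> sides \<Longrightarrow> card A \<le> card A'"
    using ex_has_least_nat[of "\<lambda>A. A \<in> sides" A0 card] by blast
  then obtain g S B where gD: "g \<in> D" and sep1: "critical_separation V E k g S A B"
    unfolding sides_def by blast
  obtain x y where g: "g = {x, y}" "x \<in> A" "y \<in> B"
    by (rule critical_separation_endpoints[OF G sep1])
  obtain f where fD: "f \<in> D" "f \<noteq> g" "x \<in> f" using no_leaf gD g(1) by blast
  have "f \<in> E" using fD(1) D(1) by blast
  then obtain a b where "f = {a, b}" using simple_graph_edgeD[OF G] by blast
  then obtain z where f: "f = {x, z}" using fD(3) by (cases "x = a") (auto simp: insert_commute)
  obtain T A1 B1 where "critical_separation V E k {x, z} T A1 B1" using crit \<open>f \<in> E\<close> f by blast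
  then obtain A' B' where sep2: "critical_separation V E k {x, z} T A' B'" "x \<in> A'" "z \<in> B'"
    by (rule critical_separation_at_endpoint[OF G])
  have "y \<noteq> z" using fD(2) f g(1) by blast
  moreover have "k < degree E x" using D(1) gD g(1) by blast
  ultimately have "card B' < card A"
    using critical_separation_shrinks[OF G nss sep1[unfolded g(1)] g(2,3) sep2] by blast
  moreover have "B' \<in> sides"
    unfolding sides_def using fD(1) f critical_separation_swap[OF sep2(1)] by blast
  ultimately show False using minA by fastforce
qed

lemma max_degree_attained:
  assumes "finite V" "V \<noteq> {}"
  obtains w where "w \<in> V" "degree E w = max_degree V E"
proof -
  have "Max (degree E ` V) \<in> degree E ` V" using assms by (intro Max_in) auto
  then obtain w where "w \<in> V" "Max (degree E ` V) = degree E w" by (auto simp: image_iff)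
  then show ?thesis using that unfolding max_degree_def by simp
qed

lemma minimally_k_connected_degree_outside_Vk:
  assumes G: "simple_graph V E" and mk: "minimally_k_connected V E k" and v: "v \<in> V - Vk V E k"
  shows "k < degree E v"
proof -
  have kc: "k_connected V E k" using mk by (simp add: minimally_k_connected_def)
  then have "k \<le> degree E v"
    using no_small_separation_min_degree[OF G k_connected_no_small_separation[OF G kc]] v
    by (simp add: k_connected_def)
  moreover have "degree E v \<noteq> k" using v by (simp add: Vk_def)
  ultimately show ?thesis by linarith
qed

lemma minimally_k_connected_forest_bound:
  assumes G: "simple_graph V E" and "1 \<le> k" and mk: "minimally_k_connected V E k"
  shows "card (del_vertices_E E (Vk V E k)) + cF V E k \<le> card (V - Vk V E k)"
proof -
  let ?K = "Vk V E k"
  have kc: "k_connected V E k" using mk by (simp add: minimally_k_connected_def)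
  have "forest (del_vertices_E E ?K)"
  proof (rule forest_subset[OF high_degree_edges_forest[OF G k_connected_no_small_separation[OF G kc]]])
    show "\<forall>g\<in>E. \<exists>S A B. critical_separation V E k g S A B"
      using minimally_k_connected_critical_separation[OF G mk] \<open>1 \<le> k\<close> by simp
    show "del_vertices_E E ?K \<subseteq> {e \<in> E. \<forall>v\<in>e. k < degree E v}"
    proof (intro subsetI CollectI conjI ballI)
      fix e assume "e \<in> del_vertices_E E ?K"
      then show "e \<in> E" by (simp add: del_vertices_E_def)
    next
      fix e v assume "e \<in> del_vertices_E E ?K" "v \<in> e"
      then have "e \<in> E" "e \<inter> ?K = {}" by (simp_all add: del_vertices_E_def)
      then have "v \<in> V - ?K" using simple_graph_edgeD[OF G \<open>e \<in> E\<close>] \<open>v \<in> e\<close> by auto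
      then show "k < degree E v" by (rule minimally_k_connected_degree_outside_Vk[OF G mk])
    qed
  qed
  then have "card (del_vertices_E E ?K) + num_components (del_vertices_V V ?K) (del_vertices_E E ?K)
      \<le> card (del_vertices_V V ?K)"
    by (rule forest_card_edges_components[OF simple_graph_del_vertices[OF G]])
  then show ?thesis by (simp add: cF_def del_vertices_V_def)
qed

lemma minimally_k_connected_Vk_bound:
  assumes G: "simple_graph V E" and "1 \<le> k" and mk: "minimally_k_connected V E k"
  shows "(k - 1) * card V + 2 * (cF V E k + card (Ek V E k)) + (max_degree V E - (k + 1))
    \<le> (2 * k - 1) * card (Vk V E k)"
proof -
  define K where "K = Vk V E k"
  define W where "W = V - K"
  define s where "s = (\<Sum>v\<in>W. degree E v)"
  have finV: "finite V" using G by (simp add: simple_graph_def)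
  have KV: "K \<subseteq> V" by (auto simp: K_def Vk_def)
  have "(\<Sum>v\<in>K. degree E v) = k * card K" by (simp add: K_def Vk_def)
  then have count: "k * card K + 2 * card (del_vertices_E E K) = s + 2 * card (Ek V E k)"
    using sum_degree_split[OF G KV] unfolding s_def W_def by (simp add: Ek_def K_def)
  have "V \<noteq> {}" using mk by (auto simp: minimally_k_connected_def k_connected_def)
  then obtain w where "w \<in> V" "degree E w = max_degree V E" by (rule max_degree_attained[OF finV])
  moreover have "\<forall>v\<in>W. k + 1 \<le> degree E v"
    using minimally_k_connected_degree_outside_Vk[OF G mk] by (simp add: W_def K_def Suc_le_eq)
  moreover have "\<forall>v\<in>V - W. degree E v \<le> k + 1" by (auto simp: W_def K_def Vk_def)
  ultimately have "(k + 1) * card W + (max_degree V E - (k + 1)) \<le> s"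
    using sum_lower_bound_with_excess[of W "k + 1" "degree E" V w] finV
    unfolding s_def W_def by fastforce
  moreover have "card V = card W + card K"
    using card_Diff_subset[OF finite_subset[OF KV finV] KV] card_mono[OF finV KV] by (simp add: W_def)
  moreover obtain j where "k = Suc j" using \<open>1 \<le> k\<close> by (cases k) auto
  ultimately show ?thesis
    using count minimally_k_connected_forest_bound[OF assms] by (simp add: K_def W_def algebra_simps)
qed

theorem mainTheorem1:
  fixes V :: "'a set" and E :: "'a set set" and k :: nat
  assumes "simple_graph V E"
    and "k \<ge> 1"
    and "minimally_k_connected V E k"
  shows "real (card (Vk V E k)) \<ge>
    ((real k - 1) * real (card V)
      + 2 * (real (cF V E k) + real (card (Ek V E k)))
      + max 0 (real (max_degree V E) - (real k + 1))) / (2 * real k - 1)"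
proof -
  have "real ((k - 1) * card V + 2 * (cF V E k + card (Ek V E k)) + (max_degree V E - (k + 1)))
      \<le> real ((2 * k - 1) * card (Vk V E k))"
    using minimally_k_connected_Vk_bound[OF assms] by (simp only: of_nat_le_iff)
  moreover have "real (k - 1) = real k - 1" "real (2 * k - 1) = 2 * real k - 1"
    using assms(2) by (simp_all add: of_nat_diff)
  moreover have "real (max_degree V E - (k + 1)) = max 0 (real (max_degree V E) - (real k + 1))"
    by (simp add: of_nat_diff max_def)
  ultimately have "(real k - 1) * real (card V) + 2 * (real (cF V E k) + real (card (Ek V E k)))
      + max 0 (real (max_degree V E) - (real k + 1)) \<le> (2 * real k - 1) * real (card (Vk V E k))"
    by (simp only: of_nat_add of_nat_mult of_nat_numeral)
  moreover have "0 < 2 * real k - 1" using assms(2) by simp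
  ultimately show ?thesis by (simp add: pos_divide_le_eq mult.commute)
qed

end
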